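(* Let $\mathbf a=\{a_k\}_{k\ge0}$ with $\operatorname{Im}a_k>0$ and let $f\in L_1(\mathbb R)$. Then for every integer $n\ge0$ and every $x\in\mathbb R$, $$S_n(f;\mathbf a;x)=\frac1\pi\int_0^\infty f(x-y)\,\frac{\sin\big(y\,\mu_n(-y;x)\big)}{y}\,dy+\frac1\pi\int_0^\infty f(x+y)\,\frac{\sin\big(y\,\mu_n(y;x)\big)}{y}\,dy .$$
   Context: Let $\Phi_n^+$ ($n\ge0$) be built from $\mathbf a$ and $\Phi_n^-$ ($n\ge1$) from $b_k:=\overline{a_{k-1}}$ ($k\ge1$) as follows: $\chi_k^+:=\frac{|1+a_k^2|}{1+a_k^2}$, $B_0^+:=1$, $B_n^+(z):=\prod_{k=0}^{n-1}\chi_k^+\frac{z-a_k}{z-\overline{a_k}}$, $\Phi_n^+(z):=\frac{\sqrt{\operatorname{Im}a_n}}{z-\overline{a_n}}B_n^+(z)$; $\chi_k^-:=\frac{|1+b_k^2|}{1+b_k^2}$, $B_1^-:=1$, $B_n^-(z):=\prod_{k=1}^{n-1}\chi_k^-\frac{z-b_k}{z-\overline{b_k}}$, $\Phi_n^-(z):=\frac{\sqrt{-\operatorname{Im}b_n}}{z-\overline{b_n}}B_n^-(z)$ (unimodular constants $\chi$ taken to be $1$ if the denominator vanishes); $\Phi_n:=\Phi_n^+$ for $n\ge0$, $\Phi_n:=\Phi_{-n}^-$ for $n\le-1$. For integrable $f$ let $c_k:=\frac1\pi\int_{-\infty}^\infty f(t)\overline{\Phi_k(t)}\,dt$ and $S_n(f;\mathbf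 a;x):=\sum_{k=-n}^{n-1}c_k\Phi_k(x)$. For $y\ne0$, $x\in\mathbb R$: $\mu_n(y;x):=\frac1y\int_x^{x+y}\sum_{k=0}^{n-1}\frac{2\operatorname{Im}a_k}{(u-\operatorname{Re}a_k)^2+(\operatorname{Im}a_k)^2}\,du$. *)

theory Defs
  imports "HOL-Analysis.Analysis"
begin

definition chi :: "complex \<Rightarrow> complex" where
  "chi w = (if 1 + w\<^sup>2 = 0 then 1 else complex_of_real (cmod (1 + w\<^sup>2)) / (1 + w\<^sup>2))"

definition bseq :: "(nat \<Rightarrow> complex) \<Rightarrow> nat \<Rightarrow> complex" where
  "bseq a k = cnj (a (k - 1))"

definition Bplus :: "(nat \<Rightarrow> complex) \<Rightarrow> nat \<Rightarrow> complex \<Rightarrow> complex" where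
  "Bplus a n z = (\<Prod>k<n. chi (a k) * (z - a k) / (z - cnj (a k)))"

definition Phiplus :: "(nat \<Rightarrow> complex) \<Rightarrow> nat \<Rightarrow> complex \<Rightarrow> complex" where
  "Phiplus a n z = complex_of_real (sqrt (Im (a n))) / (z - cnj (a n)) * Bplus a n z"

definition Bminus :: "(nat \<Rightarrow> complex) \<Rightarrow> nat \<Rightarrow> complex \<Rightarrow> complex" where
  "Bminus a n z = (\<Prod>k\<in>{1..<n}. chi (bseq a k) * (z - bseq a k) / (z - cnj (bseq a k)))"

definition Phiminus :: "(nat \<Rightarrow> complex) \<Rightarrow> nat \<Rightarrow> complex \<Rightarrow> complex" where
  "Phiminus a n z = complex_of_real (sqrt (- Im (bseq a n))) / (z - cnj (bseq a n)) * Bminus a n z"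

definition Phi :: "(nat \<Rightarrow> complex) \<Rightarrow> int \<Rightarrow> complex \<Rightarrow> complex" where
  "Phi a k z = (if k \<ge> 0 then Phiplus a (nat k) z else Phiminus a (nat (- k)) z)"

definition coeff_c :: "(nat \<Rightarrow> complex) \<Rightarrow> (real \<Rightarrow> complex) \<Rightarrow> int \<Rightarrow> complex" where
  "coeff_c a f k = complex_of_real (1 / pi) *
     integral\<^sup>L lborel (\<lambda>t. f t * cnj (Phi a k (complex_of_real t)))"

definition Sn :: "(real \<Rightarrow> complex) \<Rightarrow> (nat \<Rightarrow> complex) \<Rightarrow> nat \<Rightarrow> real \<Rightarrow> complex" where
  "Sn f a n x = (\<Sum>k\<in>{- int n..int n - 1}. coeff_c a f k * Phi a k (complex_of_real x))"

text \<open>mu_n(y;x) = (1/y) \<integral>_x^{x+y} \<Sum>_{k<n} 2 Im a_k / ((u - Re a_k)^2 + (Im a_k)^2) du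
  (oriented integral, so negative y is handled as usual).\<close>
definition mu :: "(nat \<Rightarrow> complex) \<Rightarrow> nat \<Rightarrow> real \<Rightarrow> real \<Rightarrow> real" where
  "mu a n y x = (1 / y) * (LBINT u=ereal x..ereal (x + y).
      (\<Sum>k<n. 2 * Im (a k) / ((u - Re (a k))\<^sup>2 + (Im (a k))\<^sup>2)))"

end

theory Submission
  imports Defs
begin

text \<open>
  Write \<open>S\<^sub>n(f;a;x) = (1/\<pi>) \<integral> f(t) K\<^sub>n(x,t) dt\<close> with \<open>K\<^sub>n(x,t) = \<Sum>\<^sub>k conj \<Phi>\<^sub>k(t) \<Phi>\<^sub>k(x)\<close>.
  On the real line \<open>\<Phi>\<^sub>-\<^sub>k\<^sub>-\<^sub>1 = sqrt(Im a\<^sub>k) conj B\<^sub>k / (t - a\<^sub>k)\<close>, so adding the pair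
  \<open>\<Phi>\<^sub>k, \<Phi>\<^sub>-\<^sub>k\<^sub>-\<^sub>1\<close> to the kernel gives, by induction on \<open>n\<close>, the Christoffel--Darboux
  formula \<open>(t - x) K\<^sub>n(x,t) = Im (B\<^sub>n(t) conj B\<^sub>n(x))\<close>.
  Each Blaschke factor equals \<open>-exp(2i arctan((u - Re a)/Im a))\<close> on the real line, so
  \<open>B\<^sub>n(u) = c exp(i \<theta>\<^sub>n(u))\<close> with \<open>|c| = 1\<close> and a phase \<open>\<theta>\<^sub>n\<close> whose derivative is the
  integrand defining \<open>\<mu>\<^sub>n\<close>. Hence \<open>(t - x) K\<^sub>n(x,t) = sin(\<theta>\<^sub>n(t) - \<theta>\<^sub>n(x))\<close> and
  \<open>\<theta>\<^sub>n(x + y) - \<theta>\<^sub>n(x) = y \<mu>\<^sub>n(y;x)\<close>; splitting the integral at \<open>t = x\<close> gives the formula.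
\<close>

lemma cayley_real_eq_exp_arctan:
  "(complex_of_real z - \<i>) / (complex_of_real z + \<i>) = - exp (\<i> * of_real (2 * arctan z))"
proof -
  define w where "w = (1 - \<i> * of_real z) / (1 + \<i> * of_real z)"
  have nz: "1 + \<i> * complex_of_real z \<noteq> 0" "1 - \<i> * complex_of_real z \<noteq> 0"
    by (auto simp: complex_eq_iff)
  then have "w \<noteq> 0" by (simp add: w_def)
  have "\<i> * of_real (2 * arctan z) = - Ln w"
    by (simp add: Arctan_of_real[symmetric] Arctan_def w_def)
  then have "exp (\<i> * of_real (2 * arctan z)) = inverse w"
    using \<open>w \<noteq> 0\<close> by (simp add: exp_minus)
  moreover have "complex_of_real z - \<i> = - \<i> * (1 + \<i> * of_real z)"
    "complex_of_real z + \<i> = \<i> * (1 - \<i> * of_real z)"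
    by (simp_all add: algebra_simps)
  ultimately show ?thesis by (simp add: w_def)
qed

lemma blaschke_factor_real_eq_exp:
  assumes "Im a > 0"
  shows "(complex_of_real u - a) / (complex_of_real u - cnj a)
    = - exp (\<i> * of_real (2 * arctan ((u - Re a) / Im a)))"
proof -
  define z where "z = (u - Re a) / Im a"
  have "complex_of_real u - a = of_real (Im a) * (of_real z - \<i>)"
    "complex_of_real u - cnj a = of_real (Im a) * (of_real z + \<i>)"
    using assms by (simp_all add: z_def complex_eq_iff field_simps)
  then show ?thesis
    using assms by (simp add: cayley_real_eq_exp_arctan flip: z_def)
qed

lemma norm_chi: "norm (chi w) = 1"
  by (simp add: chi_def norm_divide)

lemma chi_mult_cnj: "chi w * cnj (chi w) = 1"
  by (simp flip: complex_norm_square add: norm_chi)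

lemma chi_cnj: "chi (cnj w) = cnj (chi w)"
proof -
  have "1 + (cnj w)\<^sup>2 = cnj (1 + w\<^sup>2)" by simp
  then show ?thesis
    unfolding chi_def by (simp del: complex_cnj_add complex_cnj_one complex_cnj_power)
qed

definition blaschke_phase :: "(nat \<Rightarrow> complex) \<Rightarrow> nat \<Rightarrow> real \<Rightarrow> real" where
  "blaschke_phase a n u = (\<Sum>k<n. 2 * arctan ((u - Re (a k)) / Im (a k)))"

lemma Bplus_real_eq_exp_phase:
  assumes "\<And>k. Im (a k) > 0"
  shows "Bplus a n (of_real u) = (\<Prod>k<n. - chi (a k)) * exp (\<i> * of_real (blaschke_phase a n u))"
proof (induction n)
  case 0
  then show ?case by (simp add: Bplus_def blaschke_phase_def)
next
  case (Suc n)
  have "Bplus a (Suc n) (of_real u)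
      = Bplus a n (of_real u) * (chi (a n) * ((of_real u - a n) / (of_real u - cnj (a n))))"
    by (simp add: Bplus_def)
  also have "\<dots> = (\<Prod>k<Suc n. - chi (a k)) *
      (exp (\<i> * of_real (blaschke_phase a n u)) * exp (\<i> * of_real (2 * arctan ((u - Re (a n)) / Im (a n)))))"
    unfolding Suc blaschke_factor_real_eq_exp[OF assms] by simp
  also have "\<dots> = (\<Prod>k<Suc n. - chi (a k)) * exp (\<i> * of_real (blaschke_phase a (Suc n) u))"
    by (simp add: blaschke_phase_def distrib_left flip: exp_add)
  finally show ?case .
qed

lemma Bplus_mult_cnj_real:
  assumes "\<And>k. Im (a k) > 0"
  shows "Bplus a n (of_real t) * cnj (Bplus a n (of_real x))
    = exp (\<i> * of_real (blaschke_phase a n t - blaschke_phase a n x))"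
proof -
  define c where "c = (\<Prod>k<n. - chi (a k))"
  have "norm c = 1"
    by (simp add: c_def norm_chi flip: prod_norm)
  then have "c * cnj c = 1"
    using complex_norm_square[of c] by simp
  then show ?thesis
    unfolding Bplus_real_eq_exp_phase[OF assms] c_def[symmetric]
    by (simp add: exp_cnj algebra_simps flip: exp_add)
qed

lemma norm_Bplus_real:
  assumes "\<And>k. Im (a k) > 0"
  shows "norm (Bplus a n (of_real u)) = 1"
  unfolding Bplus_real_eq_exp_phase[OF assms]
  by (simp add: norm_mult norm_chi flip: prod_norm)

lemma Bminus_Suc_real: "Bminus a (Suc n) (of_real u) = cnj (Bplus a n (of_real u))"
proof (induction n)
  case 0
  then show ?case by (simp add: Bplus_def Bminus_def)
next
  case (Suc n)
  have "Bminus a (Suc (Suc n)) z = Bminus a (Suc n) z *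
      (chi (bseq a (Suc n)) * (z - bseq a (Suc n)) / (z - cnj (bseq a (Suc n))))" for z
    unfolding Bminus_def by (simp add: prod.atLeastLessThan_Suc)
  then show ?case using Suc by (simp add: Bplus_def bseq_def chi_cnj)
qed

definition dirichlet_kernel :: "(nat \<Rightarrow> complex) \<Rightarrow> nat \<Rightarrow> real \<Rightarrow> real \<Rightarrow> complex" where
  "dirichlet_kernel a n x t =
     (\<Sum>k\<in>{- int n..int n - 1}. cnj (Phi a k (of_real t)) * Phi a k (of_real x))"

lemma cnj_Phiplus_mult_real:
  assumes "Im (a n) \<ge> 0"
  shows "cnj (Phiplus a n (of_real t)) * Phiplus a n (of_real x)
    = of_real (Im (a n)) * (cnj (Bplus a n (of_real t)) * Bplus a n (of_real x))
      / ((of_real t - a n) * (of_real x - cnj (a n)))"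
proof -
  have "complex_of_real (Im (a n)) = of_real (sqrt (Im (a n))) * of_real (sqrt (Im (a n)))"
    using assms by (simp flip: of_real_mult)
  then show ?thesis
    by (simp add: Phiplus_def mult_ac)
qed

lemma cnj_Phiminus_mult_real:
  assumes "Im (a n) \<ge> 0"
  shows "cnj (Phiminus a (Suc n) (of_real t)) * Phiminus a (Suc n) (of_real x)
    = of_real (Im (a n)) * (Bplus a n (of_real t) * cnj (Bplus a n (of_real x)))
      / ((of_real t - cnj (a n)) * (of_real x - a n))"
proof -
  have "complex_of_real (Im (a n)) = of_real (sqrt (Im (a n))) * of_real (sqrt (Im (a n)))"
    using assms by (simp flip: of_real_mult)
  then show ?thesis
    by (simp add: Phiminus_def Bminus_Suc_real bseq_def mult_ac)
qed

lemma dirichlet_kernel_Suc: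
  assumes "Im (a n) \<ge> 0"
  shows "dirichlet_kernel a (Suc n) x t = dirichlet_kernel a n x t
    + cnj (Phiplus a n (of_real t)) * Phiplus a n (of_real x)
    + cnj (Phiminus a (Suc n) (of_real t)) * Phiminus a (Suc n) (of_real x)"
proof -
  have "{- int (Suc n)..int (Suc n) - 1} = insert (- int (Suc n)) (insert (int n) {- int n..int n - 1})"
    by auto
  moreover have "Phi a (- int (Suc n)) z = Phiminus a (Suc n) z" "Phi a (int n) z = Phiplus a n z" for z
    by (simp_all add: Phi_def nat_add_distrib)
  ultimately show ?thesis
    by (simp add: dirichlet_kernel_def)
qed

lemma cross_ratio_sub_one:
  assumes "T \<noteq> cnj a" and "X \<noteq> a"
  shows "((T - a) * (X - cnj a) / ((T - cnj a) * (X - a)) - 1) / (2 * \<i>)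
    = (T - X) * of_real (Im a) / ((T - cnj a) * (X - a))"
proof -
  define D where "D = (T - cnj a) * (X - a)"
  have "D \<noteq> 0"
    using assms by (simp add: D_def)
  then have "(T - a) * (X - cnj a) / D - 1 = ((T - a) * (X - cnj a) - D) / D"
    by (simp add: field_simps)
  also have "(T - a) * (X - cnj a) - D = 2 * \<i> * ((T - X) * of_real (Im a))"
    by (simp add: D_def complex_eq_iff algebra_simps)
  finally show ?thesis
    by (simp flip: D_def)
qed

lemma christoffel_darboux_real:
  assumes "\<And>k. Im (a k) > 0"
  shows "of_real (t - x) * dirichlet_kernel a n x t
    = (Bplus a n (of_real t) * cnj (Bplus a n (of_real x))
       - cnj (Bplus a n (of_real t)) * Bplus a n (of_real x)) / (2 * \<i>)"
proof (induction n)
  case 0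
  then show ?case by (simp add: dirichlet_kernel_def Bplus_def)
next
  case (Suc n)
  define T X where "T = complex_of_real t" and "X = complex_of_real x"
  define P where "P = Bplus a n T * cnj (Bplus a n X)"
  define r r' where "r = (T - a n) * (X - cnj (a n)) / ((T - cnj (a n)) * (X - a n))"
    and "r' = (T - cnj (a n)) * (X - a n) / ((T - a n) * (X - cnj (a n)))"
  have real: "T \<noteq> a n" "T \<noteq> cnj (a n)" "X \<noteq> a n" "X \<noteq> cnj (a n)"
    using assms[of n] by (auto simp: T_def X_def complex_eq_iff)
  have r: "(r - 1) / (2 * \<i>) = (T - X) * of_real (Im (a n)) / ((T - cnj (a n)) * (X - a n))"
    unfolding r_def by (rule cross_ratio_sub_one) (use real in auto)
  have r': "(r' - 1) / (2 * \<i>) = - ((T - X) * of_real (Im (a n)) / ((T - a n) * (X - cnj (a n))))"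
    using cross_ratio_sub_one[of T "cnj (a n)" X] real unfolding r'_def by simp
  have "of_real (t - x) * dirichlet_kernel a (Suc n) x t
      = of_real (t - x) * dirichlet_kernel a n x t
        + cnj P * ((T - X) * of_real (Im (a n)) / ((T - a n) * (X - cnj (a n))))
        + P * ((T - X) * of_real (Im (a n)) / ((T - cnj (a n)) * (X - a n)))"
    unfolding dirichlet_kernel_Suc[OF less_imp_le[OF assms]]
      cnj_Phiplus_mult_real[OF less_imp_le[OF assms]] cnj_Phiminus_mult_real[OF less_imp_le[OF assms]]
    by (simp add: P_def T_def X_def algebra_simps)
  also have "\<dots> = (P - cnj P) / (2 * \<i>) - cnj P * ((r' - 1) / (2 * \<i>)) + P * ((r - 1) / (2 * \<i>))"
    using Suc.IH unfolding r r' by (simp add: P_def T_def X_def)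
  also have "\<dots> = (P * r - cnj P * r') / (2 * \<i>)"
    by (simp add: field_simps)
  finally have "of_real (t - x) * dirichlet_kernel a (Suc n) x t = (P * r - cnj P * r') / (2 * \<i>)" .
  moreover have P_Suc: "Bplus a (Suc n) T * cnj (Bplus a (Suc n) X) = P * r"
  proof -
    have "Bplus a (Suc n) T * cnj (Bplus a (Suc n) X) = P * (chi (a n) * cnj (chi (a n))) * r"
      by (simp add: Bplus_def P_def r_def X_def mult_ac)
    then show ?thesis by (simp add: chi_mult_cnj)
  qed
  moreover have "cnj (Bplus a (Suc n) T) * Bplus a (Suc n) X = cnj P * r'"
  proof -
    have "cnj r = r'" by (simp add: r_def r'_def T_def X_def)
    then show ?thesis using arg_cong[OF P_Suc, of cnj] by simp
  qed
  ultimately show ?case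
    unfolding T_def[symmetric] X_def[symmetric] by simp
qed

lemma dirichlet_kernel_real_eq_sin:
  assumes "\<And>k. Im (a k) > 0"
  shows "of_real (t - x) * dirichlet_kernel a n x t
    = of_real (sin (blaschke_phase a n t - blaschke_phase a n x))"
proof -
  define \<theta> where "\<theta> = blaschke_phase a n t - blaschke_phase a n x"
  have "cnj (Bplus a n (of_real t)) * Bplus a n (of_real x) = cnj (exp (\<i> * of_real \<theta>))"
    using arg_cong[OF Bplus_mult_cnj_real[OF assms, where n=n and t=t and x=x], of cnj] by (simp add: \<theta>_def)
  then show ?thesis
    unfolding christoffel_darboux_real[OF assms] Bplus_mult_cnj_real[OF assms]
    by (simp add: exp_cnj sin_exp_eq \<theta>_def flip: sin_of_real)
qed

lemma blaschke_phase_has_real_derivative: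
  assumes "\<And>k. Im (a k) > 0"
  shows "(blaschke_phase a n has_real_derivative
    (\<Sum>k<n. 2 * Im (a k) / ((u - Re (a k))\<^sup>2 + (Im (a k))\<^sup>2))) (at u)"
  unfolding blaschke_phase_def[abs_def]
proof (rule DERIV_sum)
  fix k
  have "Im (a k) > 0" by (rule assms)
  then have "2 * (inverse (1 + ((u - Re (a k)) / Im (a k))\<^sup>2) * (1 / Im (a k)))
      = 2 * Im (a k) / ((u - Re (a k))\<^sup>2 + (Im (a k))\<^sup>2)"
    by (simp add: field_simps power2_eq_square)
  moreover have "((\<lambda>u. 2 * arctan ((u - Re (a k)) / Im (a k))) has_real_derivative
      2 * (inverse (1 + ((u - Re (a k)) / Im (a k))\<^sup>2) * (1 / Im (a k)))) (at u)"
    using \<open>Im (a k) > 0\<close> by (auto intro!: derivative_eq_intros DERIV_arctan[THEN DERIV_chain2])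
  ultimately show "((\<lambda>u. 2 * arctan ((u - Re (a k)) / Im (a k))) has_real_derivative
      2 * Im (a k) / ((u - Re (a k))\<^sup>2 + (Im (a k))\<^sup>2)) (at u)"
    by (simp only:)
qed

lemma mu_eq_blaschke_phase_diff:
  assumes "\<And>k. Im (a k) > 0" and "y \<noteq> 0"
  shows "y * mu a n y x = blaschke_phase a n (x + y) - blaschke_phase a n x"
proof -
  have "(LBINT u=ereal x..ereal (x + y). (\<Sum>k<n. 2 * Im (a k) / ((u - Re (a k))\<^sup>2 + (Im (a k))\<^sup>2)))
      = blaschke_phase a n (x + y) - blaschke_phase a n x"
  proof (rule interval_integral_FTC_finite)
    have "(u - Re (a k))\<^sup>2 + (Im (a k))\<^sup>2 \<noteq> 0" for u k
      using assms(1)[of k] by (simp add: sum_power2_eq_zero_iff)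
    then show "continuous_on {min x (x + y)..max x (x + y)}
        (\<lambda>u. \<Sum>k<n. 2 * Im (a k) / ((u - Re (a k))\<^sup>2 + (Im (a k))\<^sup>2))"
      by (intro continuous_intros) auto
    show "(blaschke_phase a n has_vector_derivative
        (\<Sum>k<n. 2 * Im (a k) / ((u - Re (a k))\<^sup>2 + (Im (a k))\<^sup>2))) (at u within {min x (x + y)..max x (x + y)})" for u
      using blaschke_phase_has_real_derivative[OF assms(1)]
      by (simp add: has_real_derivative_iff_has_vector_derivative has_vector_derivative_at_within)
  qed
  then show ?thesis
    using assms(2) by (simp add: mu_def)
qed

lemma dirichlet_kernel_shift:
  assumes "\<And>k. Im (a k) > 0" and "y \<noteq> 0"
  shows "dirichlet_kernel a n x (x + y) = of_real (sin (y * mu a n y x) / y)"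
proof -
  have "of_real y * dirichlet_kernel a n x (x + y) = of_real (sin (y * mu a n y x))"
    using dirichlet_kernel_real_eq_sin[where a=a and t="x + y" and x=x and n=n, OF assms(1)]
    by (simp add: mu_eq_blaschke_phase_diff[OF assms])
  then show ?thesis
    using assms(2) by (simp add: field_simps)
qed

lemma norm_divide_real_sub_le:
  assumes "Im c \<noteq> 0"
  shows "norm (z / (complex_of_real t - c)) \<le> norm z / \<bar>Im c\<bar>"
proof -
  have "\<bar>Im c\<bar> \<le> norm (complex_of_real t - c)"
    using abs_Im_le_cmod[of "complex_of_real t - c"] by simp
  moreover have "\<bar>Im c\<bar> > 0"
    using assms by simp
  ultimately show ?thesis
    unfolding norm_divide by (intro divide_left_mono mult_pos_pos) auto
qed

lemma Phi_real_bounded: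
  assumes "\<And>k. Im (a k) > 0"
  obtains C where "\<And>t. norm (Phi a k (of_real t)) \<le> C"
proof (cases "k \<ge> 0")
  case True
  define m where "m = nat k"
  have "norm (Phi a k (of_real t)) \<le> sqrt (Im (a m)) / \<bar>Im (cnj (a m))\<bar>" for t
  proof -
    have "norm (Phi a k (of_real t)) = norm (of_real (sqrt (Im (a m))) / (of_real t - cnj (a m)))"
      using True by (simp add: Phi_def Phiplus_def m_def norm_mult norm_divide norm_Bplus_real[OF assms])
    also have "\<dots> \<le> sqrt (Im (a m)) / \<bar>Im (cnj (a m))\<bar>"
      using norm_divide_real_sub_le[of "cnj (a m)" "of_real (sqrt (Im (a m)))" t] assms[of m] by simp
    finally show ?thesis .
  qed
  then show ?thesis by (rule that)
next
  case False
  define m where "m = nat (- k) - 1"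
  then have k: "k = - int (Suc m)"
    using False by simp
  have "norm (Phi a k (of_real t)) \<le> sqrt (Im (a m)) / \<bar>Im (a m)\<bar>" for t
  proof -
    have "norm (Phi a k (of_real t)) = norm (of_real (sqrt (Im (a m))) / (of_real t - a m))"
      unfolding k by (simp add: Phi_def Phiminus_def bseq_def norm_mult norm_divide Bminus_Suc_real
          norm_Bplus_real[OF assms] nat_add_distrib)
    also have "\<dots> \<le> sqrt (Im (a m)) / \<bar>Im (a m)\<bar>"
      using norm_divide_real_sub_le[of "a m" "of_real (sqrt (Im (a m)))" t] assms[of m] by simp
    finally show ?thesis .
  qed
  then show ?thesis by (rule that)
qed

lemma Phi_real_continuous:
  assumes "\<And>k. Im (a k) > 0"
  shows "continuous_on UNIV (\<lambda>t. Phi a k (of_real t))"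
proof -
  have "complex_of_real t \<noteq> a j" "complex_of_real t \<noteq> cnj (a j)" for t j
    using assms[of j] by (auto simp: complex_eq_iff)
  then show ?thesis
    unfolding Phi_def Phiplus_def Bplus_def Phiminus_def Bminus_def bseq_def
    by (cases "k \<ge> 0"; simp; intro continuous_intros) auto
qed

lemma integrable_mult_bounded:
  fixes f g :: "'a \<Rightarrow> 'b :: {real_normed_field, banach, second_countable_topology}"
  assumes "integrable M f" and "g \<in> borel_measurable M" and "\<And>t. norm (g t) \<le> C"
  shows "integrable M (\<lambda>t. f t * g t)"
proof (rule Bochner_Integration.integrable_bound)
  show "integrable M (\<lambda>t. C *\<^sub>R f t)"
    using assms(1) by simp
  show "(\<lambda>t. f t * g t) \<in> borel_measurable M"
    using assms(1,2) by (simp add: borel_measurable_integrable)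
  have "C \<ge> 0"
    using assms(3) norm_ge_zero order_trans by blast
  moreover have "norm (f t) * norm (g t) \<le> norm (f t) * C" for t
    using assms(3) by (rule mult_left_mono) simp
  ultimately show "AE t in M. norm (f t * g t) \<le> norm (C *\<^sub>R f t)"
    by (simp add: norm_mult mult.commute)
qed

lemma integrable_mult_cnj_Phi_real:
  assumes "\<And>k. Im (a k) > 0" and "integrable lborel f"
  shows "integrable lborel (\<lambda>t. f t * cnj (Phi a k (of_real t)))"
proof -
  obtain C where "\<And>t. norm (Phi a k (of_real t)) \<le> C"
    using Phi_real_bounded[where a=a and k=k, OF assms(1)] by blast
  moreover have "continuous_on UNIV (\<lambda>t. cnj (Phi a k (of_real t)))"
    by (intro continuous_intros Phi_real_continuous[where a=a, OF assms(1)])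
  ultimately show ?thesis
    by (intro integrable_mult_bounded[OF assms(2)]) (auto intro: borel_measurable_continuous_onI)
qed

lemma Sn_eq_integral_dirichlet_kernel:
  assumes "\<And>k. Im (a k) > 0" and "integrable lborel f"
  shows "integrable lborel (\<lambda>t. f t * dirichlet_kernel a n x t)"
    and "Sn f a n x = of_real (1 / pi) * (\<integral>t. f t * dirichlet_kernel a n x t \<partial>lborel)"
proof -
  have summand: "integrable lborel (\<lambda>t. f t * cnj (Phi a k (of_real t)) * Phi a k (of_real x))" for k
    using integrable_mult_cnj_Phi_real[OF assms] by simp
  have kernel: "f t * dirichlet_kernel a n x t
      = (\<Sum>k\<in>{- int n..int n - 1}. f t * cnj (Phi a k (of_real t)) * Phi a k (of_real x))" for t
    by (simp add: dirichlet_kernel_def sum_distrib_left mult.assoc)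
  show "integrable lborel (\<lambda>t. f t * dirichlet_kernel a n x t)"
    unfolding kernel using summand by simp
  have "Sn f a n x = of_real (1 / pi) * (\<Sum>k\<in>{- int n..int n - 1}.
      \<integral>t. f t * cnj (Phi a k (of_real t)) * Phi a k (of_real x) \<partial>lborel)"
    unfolding Sn_def coeff_c_def integral_mult_left_zero by (simp add: sum_distrib_left mult.assoc)
  also have "\<dots> = of_real (1 / pi) * (\<integral>t. f t * dirichlet_kernel a n x t \<partial>lborel)"
    unfolding kernel using summand by (simp add: Bochner_Integration.integral_sum)
  finally show "Sn f a n x = of_real (1 / pi) * (\<integral>t. f t * dirichlet_kernel a n x t \<partial>lborel)" .
qed

lemma lborel_integral_split_at:
  fixes g :: "real \<Rightarrow> 'a :: {banach, second_countable_topology}"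
  assumes "integrable lborel g"
  shows "(\<integral>t. g t \<partial>lborel) = (LINT y:{0<..}|lborel. g (x - y)) + (LINT y:{0<..}|lborel. g (x + y))"
proof -
  have shifted: "integrable lborel (\<lambda>y. g (x + y))"
    using lborel_integrable_real_affine[OF assms, of 1 x] by simp
  have "(\<integral>t. g t \<partial>lborel) = (\<integral>y. g (x + y) \<partial>lborel)"
    using lborel_integral_real_affine[of 1 g x] by simp
  also have "\<dots> = (\<integral>y. indicator {0<..} y *\<^sub>R g (x + y) + indicator {..<0} y *\<^sub>R g (x + y) \<partial>lborel)"
  proof (rule integral_cong_AE)
    show "(\<lambda>y. g (x + y)) \<in> borel_measurable lborel"
      using shifted by (rule borel_measurable_integrable)
    show "(\<lambda>y. indicator {0<..} y *\<^sub>R g (x + y) + indicator {..<0} y *\<^sub>R g (x + y)) \<in> borel_measurable lborel"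
      using shifted by (intro borel_measurable_integrable Bochner_Integration.integrable_add
          integrable_mult_indicator) auto
    show "AE y in lborel. g (x + y) = indicator {0<..} y *\<^sub>R g (x + y) + indicator {..<0} y *\<^sub>R g (x + y)"
      using AE_lborel_singleton[of 0] by eventually_elim (auto simp: indicator_def)
  qed
  also have "\<dots> = (\<integral>y. indicator {0<..} y *\<^sub>R g (x + y) \<partial>lborel) + (\<integral>y. indicator {..<0} y *\<^sub>R g (x + y) \<partial>lborel)"
    using shifted by (intro Bochner_Integration.integral_add integrable_mult_indicator) auto
  also have "(\<integral>y. indicator {..<0} y *\<^sub>R g (x + y) \<partial>lborel) = (\<integral>y. indicator {0<..} y *\<^sub>R g (x - y) \<partial>lborel)"
    using lborel_integral_real_affine[of "-1" "\<lambda>y. indicator {..<0} y *\<^sub>R g (x + y)" 0]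
    by (simp add: indicator_def)
  finally show ?thesis
    unfolding set_lebesgue_integral_def by simp
qed

theorem lemma5:
  fixes a :: "nat \<Rightarrow> complex" and f :: "real \<Rightarrow> complex" and n :: nat and x :: real
  assumes "\<And>k. Im (a k) > 0"
    and "integrable lborel f"
  shows "Sn f a n x =
    complex_of_real (1 / pi) *
      (LINT y:{0<..}|lborel. (sin (y * mu a n (- y) x) / y) *\<^sub>R f (x - y))
  + complex_of_real (1 / pi) *
      (LINT y:{0<..}|lborel. (sin (y * mu a n y x) / y) *\<^sub>R f (x + y))"
proof -
  have plus: "f (x + y) * dirichlet_kernel a n x (x + y) = (sin (y * mu a n y x) / y) *\<^sub>R f (x + y)"
    if "y > 0" for y
    using dirichlet_kernel_shift[where a=a, OF assms(1)] that by (simp add: scaleR_conv_of_real)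
  have minus: "f (x - y) * dirichlet_kernel a n x (x - y) = (sin (y * mu a n (- y) x) / y) *\<^sub>R f (x - y)"
    if "y > 0" for y
    using dirichlet_kernel_shift[where a=a and y="- y", OF assms(1)] that by (simp add: scaleR_conv_of_real)
  have "Sn f a n x = of_real (1 / pi) * (\<integral>t. f t * dirichlet_kernel a n x t \<partial>lborel)"
    by (rule Sn_eq_integral_dirichlet_kernel(2)[OF assms])
  also have "(\<integral>t. f t * dirichlet_kernel a n x t \<partial>lborel)
      = (LINT y:{0<..}|lborel. f (x - y) * dirichlet_kernel a n x (x - y))
        + (LINT y:{0<..}|lborel. f (x + y) * dirichlet_kernel a n x (x + y))"
    by (rule lborel_integral_split_at[OF Sn_eq_integral_dirichlet_kernel(1)[OF assms]])
  also have "\<dots> = (LINT y:{0<..}|lborel. (sin (y * mu a n (- y) x) / y) *\<^sub>R f (x - y))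
      + (LINT y:{0<..}|lborel. (sin (y * mu a n y x) / y) *\<^sub>R f (x + y))"
    using plus minus by (intro arg_cong2[where f="(+)"] set_lebesgue_integral_cong) auto
  finally show ?thesis
    by (simp add: distrib_left)
qed

end
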